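(* Let $p\in[0,1]$ and $n\in\mathbb N$. The families $(|C_1^{n,p}|,|C_2^{n,p}|,\dots)$ and $(Y_1^{(p)}(\tau_n),Y_2^{(p)}(\tau_n),\dots)$ have the same law.
   Context: A recursive tree on $[n]=\{1,\dots,n\}$ is a tree on vertex set $[n]$, rooted at $1$, such that the labels along the path from the root to any vertex are increasing. A random recursive tree $T_n$ is chosen uniformly among the $(n-1)!$ recursive trees on $[n]$. Perform Bernoulli bond percolation on $T_n$ with parameter $p$: each edge is erased independently with probability $1-p$ (kept with probability $p$). Let $C_1^{n,p},C_2^{n,p},\dots$ be the resulting connected components (clusters), enumerated in increasing order of the label of their smallest vertex, with $C_i^{n,p}=\emptyset$ if there are fewer than $i$ clusters; $|C|$ is the number of vertices of $C$. Separately, let $Z=(Z(t))_{t\ge0}$ be a standard Yule process (pure birth, rate $1$ per individual, $Z(0)=1$); each newborn is, independently, a clone of its parent with probability $p$ and a mutant of a new type with probability $1-p$; the ancestor has type $1$ and successive mutants receive types $2,3,\dots$ in order of birth. $Y_i^{(p)}(t)$ is the number of type-$i$ individuals at time $t$ (zero if none), and $\tau_n=\inf\{t\ge0: Z(t)=n\}$. *)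

theory Defs
  imports "HOL-Probability.Probability"
begin

text \<open>A recursive tree on [n] = {1..n}, rooted at 1, is encoded by its parent map:
  vertex k in {2..n} has parent par k.  The labels along the path from the root to any
  vertex are increasing iff every parent has a smaller label, i.e. par k \<in> {1..<k}.\<close>

definition recursive_trees :: "nat \<Rightarrow> (nat \<Rightarrow> nat) set" where
  "recursive_trees n = PiE {2..n} (\<lambda>k. {1..<k})"

text \<open>Percolation: keep k says whether the edge {k, par k} is kept.
  The kept edges as a (directed) relation; clusters are connected components.\<close>

definition kept_edges :: "nat \<Rightarrow> (nat \<Rightarrow> nat) \<Rightarrow> (nat \<Rightarrow> bool) \<Rightarrow> (nat \<times> nat) set" where
  "kept_edges n par keep = {(k, par k) | k. k \<in> {2..n} \<and> keep k}"

definition cluster :: "nat \<Rightarrow> (nat \<Rightarrow> nat) \<Rightarrow> (nat \<Rightarrow> bool) \<Rightarrow> nat \<Rightarrow> nat set" where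
  "cluster n par keep v =
     {w \<in> {1..n}. (v, w) \<in> (kept_edges n par keep \<union> (kept_edges n par keep)\<inverse>)\<^sup>*}"

definition clusters :: "nat \<Rightarrow> (nat \<Rightarrow> nat) \<Rightarrow> (nat \<Rightarrow> bool) \<Rightarrow> nat set set" where
  "clusters n par keep = cluster n par keep ` {1..n}"

text \<open>|C_i| for i \<ge> 1: clusters enumerated in increasing order of their smallest vertex;
  0 if there are fewer than i clusters.  By convention the value at index 0 is 0.\<close>

definition cluster_sizes :: "nat \<Rightarrow> (nat \<Rightarrow> nat) \<Rightarrow> (nat \<Rightarrow> bool) \<Rightarrow> nat \<Rightarrow> nat" where
  "cluster_sizes n par keep i =
     (let ms = sorted_list_of_set (Min ` clusters n par keep) in
      if 1 \<le> i \<and> i \<le> length ms then card (cluster n par keep (ms ! (i - 1))) else 0)"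

definition percolated_rrt :: "nat \<Rightarrow> real \<Rightarrow> ((nat \<Rightarrow> nat) \<times> (nat \<Rightarrow> bool)) pmf" where
  "percolated_rrt n p =
     pair_pmf (pmf_of_set (recursive_trees n)) (Pi_pmf {2..n} False (\<lambda>_. bernoulli_pmf p))"

text \<open>Standard construction of the Yule process (pure birth, rate 1 per individual) via its
  jump chain and holding times.  Individuals are numbered 1,2,3,... in order of birth.
  Coordinate k of \<omega> describes the (k+1)-th birth (of individual k+2), which happens when the
  population has size k+1: fst (\<omega> k) is the Exp(k+1) holding time before that birth,
  fst (snd (\<omega> k)) is the parent, uniform on the current individuals {1..k+1}, and
  snd (snd (\<omega> k)) is True iff the newborn is a clone (probability p).\<close>

type_synonym yule_omega = "nat \<Rightarrow> real \<times> nat \<times> bool"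

definition yule_space :: "real \<Rightarrow> yule_omega measure" where
  "yule_space p = PiM UNIV (\<lambda>k::nat.
      density lborel (exponential_density (real (Suc k)))
        \<Otimes>\<^sub>M (measure_pmf (pmf_of_set {1..Suc k}) \<Otimes>\<^sub>M measure_pmf (bernoulli_pmf p)))"

definition birth_time :: "yule_omega \<Rightarrow> nat \<Rightarrow> real" where
  "birth_time \<omega> j = (\<Sum>i<j - 1. fst (\<omega> i))"

text \<open>yule_types \<omega> k j: type of individual j after k births. The ancestor has type 1;
  the mutant born at birth k gets type (number of mutants among births 0..k) + 1.\<close>

primrec yule_types :: "yule_omega \<Rightarrow> nat \<Rightarrow> nat \<Rightarrow> nat" where
  "yule_types \<omega> 0 = (\<lambda>j. if j = 1 then 1 else 0)"
| "yule_types \<omega> (Suc k) = (yule_types \<omega> k)(k + 2 :=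
     (if snd (snd (\<omega> k)) then yule_types \<omega> k (fst (snd (\<omega> k)))
      else card {i. i \<le> k \<and> \<not> snd (snd (\<omega> i))} + 1))"

definition yule_type :: "yule_omega \<Rightarrow> nat \<Rightarrow> nat" where
  "yule_type \<omega> j = yule_types \<omega> (j - 1) j"

definition yule_Z :: "yule_omega \<Rightarrow> real \<Rightarrow> nat" where
  "yule_Z \<omega> t = card {j. 1 \<le> j \<and> birth_time \<omega> j \<le> t}"

definition yule_Y :: "yule_omega \<Rightarrow> nat \<Rightarrow> real \<Rightarrow> nat" where
  "yule_Y \<omega> i t = card {j. 1 \<le> j \<and> birth_time \<omega> j \<le> t \<and> yule_type \<omega> j = i}"

definition yule_tau :: "yule_omega \<Rightarrow> nat \<Rightarrow> real" where
  "yule_tau \<omega> n = Inf {t. 0 \<le> t \<and> yule_Z \<omega> t = n}"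

end

theory Submission
  imports Defs
begin

text \<open>Run the Yule process until it has n individuals. Holding times are almost surely positive,
  so at time \<open>\<tau>\<^sub>n\<close> the population is exactly {1..n}. Its genealogy is a random recursive tree:
  the parent of individual k + 2 is uniform on {1..k + 1}, independently of everything else, and
  each newborn is independently a clone with probability p. Declaring the edge to the parent kept
  iff the newborn is a clone turns this into Bernoulli bond percolation on a uniform random
  recursive tree. Types are inherited along kept edges and a new type is created at every erased
  edge, numbered in order of birth; hence the type-i individuals form the cluster with the i-th
  smallest minimum, and the two families of sizes are the same function of the same random tree.\<close>

section \<open>Labellings of the percolation clusters\<close>

lemma card_le_nth_sorted_list_of_set:
  fixes A :: "'a::linorder set"
  assumes "finite A" and "k < card A"
  shows "card {x \<in> A. x \<le> sorted_list_of_set A ! k} = Suc k"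
proof -
  define xs where "xs = sorted_list_of_set A"
  have sorted: "sorted_wrt (<) xs" and len: "length xs = card A"
    and A: "A = set xs" and dist: "distinct xs"
    using assms(1) by (simp_all add: xs_def)
  have le_iff: "xs ! i \<le> xs ! k \<longleftrightarrow> i \<le> k" if "i < length xs" for i
    using sorted that assms(2) len
    by (metis linorder_not_le nless_le sorted_wrt_nth_less)
  have "{x \<in> A. x \<le> xs ! k} = (!) xs ` {..k}"
    unfolding A set_conv_nth using le_iff assms(2) len by force
  moreover have "inj_on ((!) xs) {..k}"
    using dist assms(2) len by (simp add: inj_on_def nth_eq_iff_index_eq)
  ultimately show ?thesis by (simp add: card_image xs_def)
qed

definition cluster_roots :: "nat \<Rightarrow> (nat \<Rightarrow> bool) \<Rightarrow> nat set" where
  "cluster_roots n keep = insert 1 {j \<in> {2..n}. \<not> keep j}"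

lemma card_cluster_roots_le:
  assumes "j \<in> {2..n}"
  shows "card {r \<in> cluster_roots n keep. r \<le> j} = card {i. i \<le> j - 2 \<and> \<not> keep (i + 2)} + 1"
proof -
  have "{r \<in> cluster_roots n keep. r \<le> j} = insert 1 ((\<lambda>i. i + 2) ` {i. i \<le> j - 2 \<and> \<not> keep (i + 2)})"
  proof (rule set_eqI)
    fix x
    have "x \<in> {2..j} \<longleftrightarrow> x = x - 2 + 2 \<and> x - 2 \<le> j - 2" using assms by auto
    then show "x \<in> {r \<in> cluster_roots n keep. r \<le> j} \<longleftrightarrow>
      x \<in> insert 1 ((\<lambda>i. i + 2) ` {i. i \<le> j - 2 \<and> \<not> keep (i + 2)})"
      using assms unfolding cluster_roots_def by (auto simp: image_iff)
  qed
  moreover have "1 \<notin> (\<lambda>i. i + 2) ` {i. i \<le> j - 2 \<and> \<not> keep (i + 2)}" by auto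
  ultimately show ?thesis by (simp add: card_image inj_on_def)
qed

locale recursive_tree_labelling =
  fixes n :: nat and par :: "nat \<Rightarrow> nat" and keep :: "nat \<Rightarrow> bool" and T :: "nat \<Rightarrow> nat"
  assumes n_pos: "1 \<le> n"
    and par_less: "j \<in> {2..n} \<Longrightarrow> par j \<in> {1..<j}"
    and label_1: "T 1 = 1"
    and label_step: "j \<in> {2..n} \<Longrightarrow>
      T j = (if keep j then T (par j) else card {r \<in> cluster_roots n keep. r \<le> j})"
begin

abbreviation roots where "roots \<equiv> cluster_roots n keep"

abbreviation link where "link \<equiv> kept_edges n par keep \<union> (kept_edges n par keep)\<inverse>"

lemma finite_roots: "finite roots"
  by (simp add: cluster_roots_def)

lemma roots_subset: "roots \<subseteq> {1..n}"
  using n_pos by (auto simp: cluster_roots_def)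

lemma label_root: "r \<in> roots \<Longrightarrow> T r = card {x \<in> roots. x \<le> r}"
proof (cases "r = 1")
  case True
  then have "{x \<in> roots. x \<le> r} = {1}" by (auto simp: cluster_roots_def)
  then show ?thesis using True label_1 by simp
qed (use label_step in \<open>auto simp: cluster_roots_def\<close>)

lemma label_roots_strict_mono:
  assumes "r \<in> roots" "r' \<in> roots" "r < r'"
  shows "T r < T r'"
proof -
  have "{x \<in> roots. x \<le> r} \<subset> {x \<in> roots. x \<le> r'}" using assms by force
  then show ?thesis
    using assms finite_roots by (simp add: label_root psubset_card_mono)
qed

lemma label_roots_inj: "r \<in> roots \<Longrightarrow> r' \<in> roots \<Longrightarrow> T r = T r' \<Longrightarrow> r = r'"
  using label_roots_strict_mono by (metis less_irrefl linorder_neqE_nat)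

lemma label_link:
  assumes "(a, b) \<in> link"
  shows "T a = T b \<and> a \<in> {1..n} \<and> b \<in> {1..n}"
  using assms label_step par_less by (fastforce simp: kept_edges_def)

lemma label_rtrancl_link:
  assumes "(v, w) \<in> link\<^sup>*" and "v \<in> {1..n}"
  shows "T w = T v \<and> w \<in> {1..n}"
  using assms
proof (induction rule: rtrancl_induct)
  case (step y z)
  then show ?case using label_link[OF step.hyps(2)] by simp
qed simp

lemma linked_root_below:
  assumes "w \<in> {1..n}"
  shows "\<exists>r \<in> roots. r \<le> w \<and> T r = T w \<and> (w, r) \<in> link\<^sup>*"
  using assms
proof (induction w rule: less_induct)
  case (less w)
  show ?case
  proof (cases "w \<in> roots")
    case False
    then have w: "w \<in> {2..n}" "keep w" using less.prems by (auto simp: cluster_roots_def)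
    then have pw: "par w \<in> {1..<w}" using par_less by simp
    then obtain r where r: "r \<in> roots" "r \<le> par w" "T r = T (par w)" "(par w, r) \<in> link\<^sup>*"
      using less.IH w by auto
    have "(w, par w) \<in> link" using w by (auto simp: kept_edges_def)
    then have "(w, r) \<in> link\<^sup>*" using r(4) by (rule converse_rtrancl_into_rtrancl)
    then show ?thesis using r pw w label_step by (intro bexI[of _ r]) auto
  qed auto
qed

lemma cluster_eq_label_set:
  assumes "v \<in> {1..n}"
  shows "cluster n par keep v = {w \<in> {1..n}. T w = T v}"
proof
  show "cluster n par keep v \<subseteq> {w \<in> {1..n}. T w = T v}"
    using label_rtrancl_link assms by (auto simp: cluster_def)
next
  show "{w \<in> {1..n}. T w = T v} \<subseteq> cluster n par keep v"
  proof
    fix w assume w: "w \<in> {w \<in> {1..n}. T w = T v}"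
    obtain r where r: "r \<in> roots" "T r = T v" "(v, r) \<in> link\<^sup>*"
      using linked_root_below[OF assms] by auto
    from w have "w \<in> {1..n}" "T w = T v" by auto
    then obtain r' where r': "r' \<in> roots" "T r' = T w" "(w, r') \<in> link\<^sup>*"
      using linked_root_below by blast
    have "r' = r" using label_roots_inj r r' w by auto
    have "(r', w) \<in> link\<^sup>*"
      using rtrancl_converseI[OF r'(3)] by (simp add: converse_Un sup_commute)
    then have "(v, w) \<in> link\<^sup>*" using r(3) \<open>r' = r\<close> by simp
    then show "w \<in> cluster n par keep v" using w by (simp add: cluster_def)
  qed
qed

lemma Min_cluster:
  assumes "v \<in> {1..n}"
  shows "Min (cluster n par keep v) \<in> roots \<and> T (Min (cluster n par keep v)) = T v"
proof -
  obtain r where r: "r \<in> roots" "r \<le> v" "T r = T v" using linked_root_below[OF assms] by auto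
  have "r \<le> w" if "w \<in> cluster n par keep v" for w
  proof -
    have w: "w \<in> {1..n}" "T w = T v" using that cluster_eq_label_set[OF assms] by auto
    obtain r' where "r' \<in> roots" "r' \<le> w" "T r' = T w" using linked_root_below[OF w(1)] by auto
    then show ?thesis using label_roots_inj r w by metis
  qed
  moreover have "r \<in> cluster n par keep v"
    using cluster_eq_label_set[OF assms] r roots_subset by auto
  ultimately have "Min (cluster n par keep v) = r"
    by (intro Min_eqI) (auto simp: cluster_def)
  then show ?thesis using r by simp
qed

lemma Min_clusters: "Min ` clusters n par keep = roots"
proof
  show "Min ` clusters n par keep \<subseteq> roots" using Min_cluster by (auto simp: clusters_def)
next
  show "roots \<subseteq> Min ` clusters n par keep"
  proof
    fix r assume r: "r \<in> roots"
    then have "r \<in> {1..n}" using roots_subset by auto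
    then have "Min (cluster n par keep r) = r" using Min_cluster label_roots_inj r by metis
    then show "r \<in> Min ` clusters n par keep"
      using \<open>r \<in> {1..n}\<close> by (force simp: clusters_def)
  qed
qed

lemma label_range:
  assumes "w \<in> {1..n}"
  shows "T w \<in> {1..card roots}"
proof -
  obtain r where r: "r \<in> roots" "T r = T w" using linked_root_below[OF assms] by auto
  have "card {x \<in> roots. x \<le> r} \<le> card roots" using finite_roots by (intro card_mono) auto
  moreover have "card {x \<in> roots. x \<le> r} \<noteq> 0" using r finite_roots by auto
  ultimately show ?thesis using r label_root by (metis atLeastAtMost_iff less_one not_le)
qed

lemma cluster_sizes_eq_card_label_set:
  "cluster_sizes n par keep i = card {w \<in> {1..n}. T w = i}"
proof -
  define ms where "ms = sorted_list_of_set roots"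
  have len: "length ms = card roots" and set_ms: "set ms = roots"
    using finite_roots by (simp_all add: ms_def)
  show ?thesis
  proof (cases "1 \<le> i \<and> i \<le> length ms")
    case True
    define r where "r = ms ! (i - 1)"
    have i: "i - 1 < card roots" using True len by linarith
    then have r: "r \<in> roots" using nth_mem len set_ms by (auto simp: r_def)
    have "T r = i"
      using label_root[OF r] card_le_nth_sorted_list_of_set[OF finite_roots i] True
      by (simp add: r_def ms_def)
    have "cluster_sizes n par keep i = card (cluster n par keep r)"
      using True by (simp add: cluster_sizes_def Min_clusters ms_def[symmetric] r_def)
    also have "cluster n par keep r = {w \<in> {1..n}. T w = i}"
      using cluster_eq_label_set[of r] r roots_subset \<open>T r = i\<close> by auto
    finally show ?thesis .
  next
    case False
    then have "{w \<in> {1..n}. T w = i} = {}" using label_range len by fastforce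
    moreover have "cluster_sizes n par keep i = 0"
      by (simp only: cluster_sizes_def Let_def Min_clusters ms_def[symmetric] if_not_P[OF False])
    ultimately show ?thesis by simp
  qed
qed

end

section \<open>Types in the Yule process\<close>

lemma yule_types_stable: "j \<le> Suc k \<Longrightarrow> k \<le> m \<Longrightarrow> yule_types \<omega> m j = yule_types \<omega> k j"
  by (induction m) (auto simp: le_Suc_eq)

lemma yule_types_cong:
  "(\<And>i. i < k \<Longrightarrow> snd (\<omega> i) = snd (\<omega>' i)) \<Longrightarrow> yule_types \<omega> k = yule_types \<omega>' k"
proof (induction k)
  case (Suc k)
  have IH: "yule_types \<omega> k = yule_types \<omega>' k" and last: "snd (\<omega> k) = snd (\<omega>' k)"
    using Suc by simp_all
  have mutants: "{i. i \<le> k \<and> \<not> snd (snd (\<omega> i))} = {i. i \<le> k \<and> \<not> snd (snd (\<omega>' i))}"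
    using Suc.prems by (metis le_imp_less_Suc)
  show ?case by (simp only: yule_types.simps IH last mutants)
qed simp

lemma yule_type_cong:
  "(\<And>i. i < j - 1 \<Longrightarrow> snd (\<omega> i) = snd (\<omega>' i)) \<Longrightarrow> yule_type \<omega> j = yule_type \<omega>' j"
  unfolding yule_type_def by (metis yule_types_cong)

lemma yule_type_1: "yule_type \<omega> 1 = 1"
  by (simp add: yule_type_def)

lemma yule_type_step:
  assumes "2 \<le> j" and "fst (snd (\<omega> (j - 2))) < j"
  shows "yule_type \<omega> j = (if snd (snd (\<omega> (j - 2))) then yule_type \<omega> (fst (snd (\<omega> (j - 2))))
           else card {i. i \<le> j - 2 \<and> \<not> snd (snd (\<omega> i))} + 1)"
proof -
  obtain k where j: "j = k + 2" using assms(1) by (metis add.commute le_Suc_ex)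
  have "yule_types \<omega> k (fst (snd (\<omega> k))) = yule_type \<omega> (fst (snd (\<omega> k)))"
    using assms(2) unfolding yule_type_def j by (intro yule_types_stable) auto
  then show ?thesis by (simp add: yule_type_def j)
qed

definition type_counts :: "nat \<Rightarrow> (nat \<Rightarrow> nat) \<Rightarrow> nat \<Rightarrow> nat" where
  "type_counts n T i = card {j \<in> {1..n}. T j = i}"

text \<open>A jump chain whose genealogy is the given tree; through it \<open>yule_type\<close> also labels the
  clusters of a percolated recursive tree.\<close>

definition chain_of_tree :: "(nat \<Rightarrow> nat) \<times> (nat \<Rightarrow> bool) \<Rightarrow> yule_omega" where
  "chain_of_tree t k = (0, fst t (k + 2), snd t (k + 2))"

text \<open>The values \<open>undefined\<close> and \<open>False\<close> outside {2..n} are the defaults of \<open>PiE\<close> and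
  \<open>Pi_pmf\<close>, so that every point in the support of \<open>percolated_rrt\<close> is of this form.\<close>

definition tree_of_choices :: "nat \<Rightarrow> (nat \<times> bool) list \<Rightarrow> (nat \<Rightarrow> nat) \<times> (nat \<Rightarrow> bool)" where
  "tree_of_choices n cs =
     ((\<lambda>k. if k \<in> {2..n} then fst (cs ! (k - 2)) else undefined),
      (\<lambda>k. if k \<in> {2..n} then snd (cs ! (k - 2)) else False))"

definition yule_tree :: "nat \<Rightarrow> yule_omega \<Rightarrow> (nat \<Rightarrow> nat) \<times> (nat \<Rightarrow> bool)" where
  "yule_tree n \<omega> = tree_of_choices n (map (\<lambda>i. snd (\<omega> i)) [0..<n - 1])"

lemma yule_type_chain_of_yule_tree:
  "j \<le> n \<Longrightarrow> yule_type (chain_of_tree (yule_tree n \<omega>)) j = yule_type \<omega> j"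
  by (rule yule_type_cong) (auto simp: chain_of_tree_def yule_tree_def tree_of_choices_def)

lemma type_counts_chain_of_yule_tree:
  "type_counts n (yule_type (chain_of_tree (yule_tree n \<omega>))) = type_counts n (yule_type \<omega>)"
  unfolding type_counts_def by (intro ext arg_cong[where f = card] Collect_cong)
    (auto simp: yule_type_chain_of_yule_tree)

lemma cluster_sizes_eq_type_counts:
  assumes "1 \<le> n" and "par \<in> recursive_trees n"
  shows "cluster_sizes n par keep = type_counts n (yule_type (chain_of_tree (par, keep)))"
proof -
  interpret recursive_tree_labelling n par keep "yule_type (chain_of_tree (par, keep))"
  proof
    show par_less: "par j \<in> {1..<j}" if "j \<in> {2..n}" for j
      using assms(2) that by (auto simp: recursive_trees_def PiE_iff)
    show "yule_type (chain_of_tree (par, keep)) 1 = 1" by (rule yule_type_1)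
    show "yule_type (chain_of_tree (par, keep)) j =
      (if keep j then yule_type (chain_of_tree (par, keep)) (par j)
       else card {r \<in> cluster_roots n keep. r \<le> j})" if "j \<in> {2..n}" for j
    proof -
      have "j - 2 + 2 = j" using that by auto
      then have birth: "chain_of_tree (par, keep) (j - 2) = (0, par j, keep j)"
        by (simp add: chain_of_tree_def)
      have mutants: "{i. i \<le> j - 2 \<and> \<not> snd (snd (chain_of_tree (par, keep) i))}
          = {i. i \<le> j - 2 \<and> \<not> keep (i + 2)}"
        by (simp add: chain_of_tree_def)
      show ?thesis
        using yule_type_step[of j "chain_of_tree (par, keep)"] par_less[OF that] that
        by (simp add: birth mutants card_cluster_roots_le)
    qed
  qed (rule assms(1))
  show ?thesis by (simp add: fun_eq_iff type_counts_def cluster_sizes_eq_card_label_set)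
qed

section \<open>Measurability\<close>

definition yule_coord :: "real \<Rightarrow> nat \<Rightarrow> (real \<times> nat \<times> bool) measure" where
  "yule_coord p k = density lborel (exponential_density (real (Suc k)))
     \<Otimes>\<^sub>M (measure_pmf (pmf_of_set {1..Suc k}) \<Otimes>\<^sub>M measure_pmf (bernoulli_pmf p))"

lemma yule_space_eq_PiM: "yule_space p = PiM UNIV (yule_coord p)"
  unfolding yule_space_def yule_coord_def by (rule refl)

lemma prob_space_yule_coord: "prob_space (yule_coord p k)"
  unfolding yule_coord_def
  by (intro prob_space_pair prob_space_exponential_density prob_space_measure_pmf) auto

lemma space_yule_coord: "space (yule_coord p k) = UNIV"
  by (simp add: yule_coord_def space_pair_measure)

lemma space_yule_space: "space (yule_space p) = UNIV"
  by (simp add: yule_space_eq_PiM space_PiM space_yule_coord)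

lemma sets_pair_measure_pmf:
  "sets (measure_pmf (A :: 'a::countable pmf) \<Otimes>\<^sub>M measure_pmf (B :: 'b::countable pmf)) = UNIV"
proof -
  have "sets (measure_pmf A \<Otimes>\<^sub>M measure_pmf B)
      = sets (count_space (UNIV :: 'a set) \<Otimes>\<^sub>M count_space (UNIV :: 'b set))"
    by (intro sets_pair_measure_cong) auto
  also have "\<dots> = sets (count_space (UNIV \<times> UNIV))"
    by (subst pair_measure_countable) auto
  finally show ?thesis by simp
qed

lemma measurable_yule_coord: "(\<lambda>\<omega>. \<omega> k) \<in> measurable (yule_space p) (yule_coord p k)"
  unfolding yule_space_eq_PiM by (rule measurable_component_singleton) simp

lemma measurable_holding_time [measurable]:
  "(\<lambda>\<omega>. fst (\<omega> k)) \<in> borel_measurable (yule_space p)"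
  using measurable_compose[OF measurable_yule_coord[unfolded yule_coord_def] measurable_fst]
  by (simp cong: measurable_cong_sets)

lemma measurable_birth_time [measurable]:
  "(\<lambda>\<omega>. birth_time \<omega> j) \<in> borel_measurable (yule_space p)"
  unfolding birth_time_def by measurable

lemma tree_of_choices_eq_iff:
  "tree_of_choices n cs = tree_of_choices n cs' \<longleftrightarrow> (\<forall>i < n - 1. cs ! i = cs' ! i)"
proof
  assume eq: "tree_of_choices n cs = tree_of_choices n cs'"
  show "\<forall>i < n - 1. cs ! i = cs' ! i"
  proof (intro allI impI)
    fix i assume "i < n - 1"
    then have "i + 2 \<in> {2..n}" by auto
    then show "cs ! i = cs' ! i"
      using arg_cong[OF eq, of "\<lambda>t. fst t (i + 2)"] arg_cong[OF eq, of "\<lambda>t. snd t (i + 2)"]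
      by (simp add: tree_of_choices_def prod_eq_iff)
  qed
qed (auto simp: tree_of_choices_def fun_eq_iff)

lemma yule_tree_preimage:
  "yule_tree n -` {tree_of_choices n cs} \<inter> space (yule_space p)
     = prod_emb UNIV (yule_coord p) {..<n - 1} (\<Pi>\<^sub>E i\<in>{..<n - 1}. UNIV \<times> {cs ! i})"
  by (auto simp: yule_tree_def tree_of_choices_eq_iff space_yule_space prod_emb_iff
      space_yule_coord restrict_PiE_iff Pi_iff mem_Times_iff)

lemma measurable_yule_tree: "yule_tree n \<in> measurable (yule_space p) (count_space UNIV)"
proof -
  have "yule_tree n \<in> measurable (yule_space p) (count_space (range (tree_of_choices n)))"
    unfolding measurable_count_space_eq_countable[OF countable_image[OF countableI_type]]
  proof (intro conjI ballI Pi_I)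
    show "yule_tree n \<omega> \<in> range (tree_of_choices n)" for \<omega>
      by (simp add: yule_tree_def)
    fix t assume "t \<in> range (tree_of_choices n)"
    then obtain cs where "t = tree_of_choices n cs" by blast
    show "yule_tree n -` {t} \<inter> space (yule_space p) \<in> sets (yule_space p)"
      unfolding yule_tree_preimage[of n cs p] \<open>t = tree_of_choices n cs\<close>
      by (unfold yule_space_eq_PiM, rule sets_PiM_I) (auto simp: yule_coord_def sets_pair_measure_pmf)
  qed
  then show ?thesis by (rule measurable_compose[OF _ measurable_count_space])
qed

lemma measurable_yule_type [measurable]:
  "(\<lambda>\<omega>. yule_type \<omega> j) \<in> measurable (yule_space p) (count_space UNIV)"
proof -
  have "(\<lambda>\<omega>. yule_type (chain_of_tree (yule_tree j \<omega>)) j) \<in> measurable (yule_space p) (count_space UNIV)"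
    by (rule measurable_compose[OF measurable_yule_tree measurable_count_space])
  then show ?thesis by (simp add: yule_type_chain_of_yule_tree)
qed

text \<open>Eliminates the real time from the hitting event, leaving countably many conditions on the
  birth times.\<close>

lemma ex_time_born_set_iff:
  fixes b :: "nat \<Rightarrow> real"
  assumes "finite J"
  shows "(\<exists>t. 0 \<le> t \<and> t < a \<and> (\<forall>j. (1 \<le> j \<and> b j \<le> t) \<longleftrightarrow> j \<in> J)) \<longleftrightarrow>
    0 \<notin> J \<and> 0 < a \<and> (\<forall>j\<in>J. b j < a) \<and> (\<forall>j\<in>J. \<forall>k. 1 \<le> k \<longrightarrow> k \<notin> J \<longrightarrow> b j < b k)
      \<and> (\<forall>k. 1 \<le> k \<longrightarrow> k \<notin> J \<longrightarrow> 0 < b k)"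
    (is "_ \<longleftrightarrow> ?conds")
proof
  assume "\<exists>t. 0 \<le> t \<and> t < a \<and> (\<forall>j. (1 \<le> j \<and> b j \<le> t) \<longleftrightarrow> j \<in> J)"
  then obtain t where "0 \<le> t" "t < a" "\<And>j. (1 \<le> j \<and> b j \<le> t) \<longleftrightarrow> j \<in> J" by blast
  then show ?conds by (smt (verit) not_one_le_zero)
next
  assume conds: ?conds
  define t where "t = Max (insert 0 (b ` J))"
  have fin: "finite (insert 0 (b ` J))" using assms by simp
  have t_in: "t \<in> insert 0 (b ` J)" unfolding t_def using fin by (rule Max_in) simp
  have le_t: "x \<le> t" if "x \<in> insert 0 (b ` J)" for x unfolding t_def using fin that by simp
  have less_t: "t < b k" if "1 \<le> k" "k \<notin> J" for k
    using assms conds that unfolding t_def by (subst Max_less_iff) auto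
  have "(1 \<le> j \<and> b j \<le> t) \<longleftrightarrow> j \<in> J" for j
  proof
    show "1 \<le> j \<and> b j \<le> t \<Longrightarrow> j \<in> J" using less_t by force
    show "j \<in> J \<Longrightarrow> 1 \<le> j \<and> b j \<le> t" using conds le_t by (cases j) auto
  qed
  moreover have "0 \<le> t" "t < a" using le_t t_in conds by auto
  ultimately show "\<exists>t. 0 \<le> t \<and> t < a \<and> (\<forall>j. (1 \<le> j \<and> b j \<le> t) \<longleftrightarrow> j \<in> J)"
    by blast
qed

definition yule_hits_before :: "yule_omega \<Rightarrow> nat \<Rightarrow> real \<Rightarrow> bool" where
  "yule_hits_before \<omega> n a \<longleftrightarrow> (\<exists>t. 0 \<le> t \<and> t < a \<and> yule_Z \<omega> t = n)"

lemma yule_hits_before_iff: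
  assumes "1 \<le> n"
  shows "yule_hits_before \<omega> n a \<longleftrightarrow> (\<exists>J \<in> {J. finite J \<and> card J = n}.
     \<exists>t. 0 \<le> t \<and> t < a \<and> (\<forall>j. (1 \<le> j \<and> birth_time \<omega> j \<le> t) \<longleftrightarrow> j \<in> J))"
proof
  assume "yule_hits_before \<omega> n a"
  then obtain t where t: "0 \<le> t" "t < a" "card {j. 1 \<le> j \<and> birth_time \<omega> j \<le> t} = n"
    by (auto simp: yule_hits_before_def yule_Z_def)
  then have "finite {j. 1 \<le> j \<and> birth_time \<omega> j \<le> t}"
    using assms by (metis card.infinite not_one_le_zero)
  with t show "\<exists>J \<in> {J. finite J \<and> card J = n}.
     \<exists>t. 0 \<le> t \<and> t < a \<and> (\<forall>j. (1 \<le> j \<and> birth_time \<omega> j \<le> t) \<longleftrightarrow> j \<in> J)"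
    by (intro bexI[of _ "{j. 1 \<le> j \<and> birth_time \<omega> j \<le> t}"]) auto
next
  assume "\<exists>J \<in> {J. finite J \<and> card J = n}.
     \<exists>t. 0 \<le> t \<and> t < a \<and> (\<forall>j. (1 \<le> j \<and> birth_time \<omega> j \<le> t) \<longleftrightarrow> j \<in> J)"
  then obtain J t where "card J = n" "0 \<le> t" "t < a"
    and "{j. 1 \<le> j \<and> birth_time \<omega> j \<le> t} = J" by auto
  then show "yule_hits_before \<omega> n a" by (auto simp: yule_hits_before_def yule_Z_def)
qed

lemma measurable_yule_hits_before:
  assumes "1 \<le> n"
  shows "Measurable.pred (yule_space p) (\<lambda>\<omega>. yule_hits_before \<omega> n a)"
proof -
  have "countable {J :: nat set. finite J \<and> card J = n}"
    by (rule countable_subset[OF _ countable_Collect_finite]) auto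
  then have "Measurable.pred (yule_space p) (\<lambda>\<omega>. \<exists>J \<in> {J. finite J \<and> card J = n}.
     0 \<notin> J \<and> 0 < a \<and> (\<forall>j\<in>J. birth_time \<omega> j < a)
     \<and> (\<forall>j\<in>J. \<forall>k. 1 \<le> k \<longrightarrow> k \<notin> J \<longrightarrow> birth_time \<omega> j < birth_time \<omega> k)
     \<and> (\<forall>k. 1 \<le> k \<longrightarrow> k \<notin> J \<longrightarrow> 0 < birth_time \<omega> k))"
    by measurable
  moreover have "yule_hits_before \<omega> n a \<longleftrightarrow> (\<exists>J \<in> {J. finite J \<and> card J = n}.
     0 \<notin> J \<and> 0 < a \<and> (\<forall>j\<in>J. birth_time \<omega> j < a)
     \<and> (\<forall>j\<in>J. \<forall>k. 1 \<le> k \<longrightarrow> k \<notin> J \<longrightarrow> birth_time \<omega> j < birth_time \<omega> k)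
     \<and> (\<forall>k. 1 \<le> k \<longrightarrow> k \<notin> J \<longrightarrow> 0 < birth_time \<omega> k))" for \<omega>
    unfolding yule_hits_before_iff[OF assms] by (rule bex_cong[OF refl], rule ex_time_born_set_iff) simp
  ultimately show ?thesis by simp
qed

text \<open>The second disjunct accounts for the junk value \<open>Inf {}\<close> when the population never has
  size n.\<close>

lemma yule_tau_less_iff:
  "yule_tau \<omega> n < a \<longleftrightarrow> ((\<exists>m::nat. yule_hits_before \<omega> n m) \<and> yule_hits_before \<omega> n a) \<or>
     (\<not> (\<exists>m::nat. yule_hits_before \<omega> n m) \<and> Inf ({} :: real set) < a)"
proof -
  define W where "W = {t. 0 \<le> t \<and> yule_Z \<omega> t = n}"
  have hits: "yule_hits_before \<omega> n b \<longleftrightarrow> (\<exists>t\<in>W. t < b)" for b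
    by (auto simp: yule_hits_before_def W_def)
  have "(\<exists>m::nat. yule_hits_before \<omega> n m) \<longleftrightarrow> W \<noteq> {}"
    unfolding hits by (meson ex_in_conv reals_Archimedean2)
  moreover have "Inf W < a \<longleftrightarrow> (\<exists>t\<in>W. t < a)" if "W \<noteq> {}"
    using that by (intro cInf_less_iff) (auto simp: W_def intro: bdd_belowI[of _ 0])
  ultimately show ?thesis
    using hits by (cases "W = {}") (auto simp: yule_tau_def W_def[symmetric])
qed

lemma measurable_yule_tau:
  assumes "1 \<le> n"
  shows "(\<lambda>\<omega>. yule_tau \<omega> n) \<in> borel_measurable (yule_space p)"
proof (subst borel_measurable_iff_less, intro allI)
  fix a :: real
  have [measurable]: "Measurable.pred (yule_space p) (\<lambda>\<omega>. yule_hits_before \<omega> n b)" for b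
    by (rule measurable_yule_hits_before[OF assms])
  have "Measurable.pred (yule_space p) (\<lambda>\<omega>. yule_tau \<omega> n < a)"
    unfolding yule_tau_less_iff by measurable
  then show "{\<omega> \<in> space (yule_space p). yule_tau \<omega> n < a} \<in> sets (yule_space p)"
    by (simp add: pred_def)
qed

lemma measurable_yule_Y_tau:
  assumes "1 \<le> n"
  shows "(\<lambda>\<omega> i. yule_Y \<omega> i (yule_tau \<omega> n)) \<in> measurable (yule_space p)
           (PiM UNIV (\<lambda>_. count_space UNIV))"
proof (rule measurable_PiM_single')
  fix i
  have born: "Measurable.pred (yule_space p)
      (\<lambda>\<omega>. 1 \<le> j \<and> birth_time \<omega> j \<le> yule_tau \<omega> n \<and> yule_type \<omega> j = i)" for j
  proof (intro pred_intros_conj1' pred_intros_logic(3))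
    show "Measurable.pred (yule_space p) (\<lambda>\<omega>. birth_time \<omega> j \<le> yule_tau \<omega> n)"
      unfolding pred_def by (rule borel_measurable_le[OF measurable_birth_time measurable_yule_tau[OF assms]])
    show "Measurable.pred (yule_space p) (\<lambda>\<omega>. yule_type \<omega> j = i)"
      by measurable
  qed
  show "(\<lambda>\<omega>. yule_Y \<omega> i (yule_tau \<omega> n)) \<in> measurable (yule_space p) (count_space UNIV)"
    unfolding yule_Y_def
    by (rule measurable_card) (simp only: mem_Collect_eq born[unfolded pred_def])
qed (auto simp: space_PiM)

section \<open>The population at the hitting time\<close>

lemma AE_holding_times_pos: "AE \<omega> in yule_space p. \<forall>k. 0 < fst (\<omega> k)"
proof (subst AE_all_countable, intro allI)
  fix k
  let ?Exp = "density lborel (exponential_density (real (Suc k)))"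
  have "AE x in lborel. x \<noteq> 0" by (rule AE_lborel_singleton)
  then have "AE x in ?Exp. 0 < x"
    by (subst AE_density) (auto elim!: AE_mp simp: exponential_density_def)
  moreover have "prob_space (measure_pmf (pmf_of_set {1..Suc k}) \<Otimes>\<^sub>M measure_pmf (bernoulli_pmf p))"
    by (intro prob_space_pair prob_space_measure_pmf)
  ultimately have "AE x in distr (yule_coord p k) ?Exp fst. 0 < x"
    unfolding yule_coord_def by (subst prob_space.distr_pair_fst)
  then have "AE x in yule_coord p k. 0 < fst x"
    unfolding yule_coord_def by (rule AE_distrD[OF measurable_fst])
  moreover have "distr (yule_space p) (yule_coord p k) (\<lambda>\<omega>. \<omega> k) = yule_coord p k"
    unfolding yule_space_eq_PiM by (rule distr_PiM_component) (auto intro: prob_space_yule_coord)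
  ultimately have "AE x in distr (yule_space p) (yule_coord p k) (\<lambda>\<omega>. \<omega> k). 0 < fst x"
    by (simp only:)
  then show "AE \<omega> in yule_space p. 0 < fst (\<omega> k)"
    by (rule AE_distrD[OF measurable_yule_coord])
qed

lemma birth_time_strict_mono:
  assumes "\<forall>k. 0 < fst (\<omega> k)" and "1 \<le> j" and "j < j'"
  shows "birth_time \<omega> j < birth_time \<omega> j'"
proof -
  have "(\<Sum>i<j - 1. fst (\<omega> i)) < (\<Sum>i<j' - 1. fst (\<omega> i))"
    using assms by (intro sum_strict_mono2[of _ _ "j - 1"]) (auto simp: less_imp_le)
  then show ?thesis by (simp add: birth_time_def)
qed

lemma birth_time_le_iff:
  assumes "\<forall>k. 0 < fst (\<omega> k)" and "1 \<le> j" and "1 \<le> j'"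
  shows "birth_time \<omega> j \<le> birth_time \<omega> j' \<longleftrightarrow> j \<le> j'"
  using birth_time_strict_mono[OF assms(1)] assms(2,3) by (metis linorder_not_le nless_le)

lemma yule_tau_eq_birth_time:
  assumes "\<forall>k. 0 < fst (\<omega> k)" and "1 \<le> n"
  shows "yule_tau \<omega> n = birth_time \<omega> n"
  unfolding yule_tau_def
proof (rule cInf_eq_minimum)
  have born: "{j. 1 \<le> j \<and> birth_time \<omega> j \<le> birth_time \<omega> n} = {1..n}"
    using birth_time_le_iff[OF assms(1) _ assms(2)] by auto
  have "0 \<le> birth_time \<omega> n"
    using assms by (simp add: birth_time_def less_imp_le sum_nonneg)
  moreover have "yule_Z \<omega> (birth_time \<omega> n) = n"
    unfolding yule_Z_def born by simp
  ultimately show "birth_time \<omega> n \<in> {t. 0 \<le> t \<and> yule_Z \<omega> t = n}" by simp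
next
  fix t assume "t \<in> {t. 0 \<le> t \<and> yule_Z \<omega> t = n}"
  then have card: "card {j. 1 \<le> j \<and> birth_time \<omega> j \<le> t} = n" by (simp add: yule_Z_def)
  show "birth_time \<omega> n \<le> t"
  proof (rule ccontr)
    assume "\<not> birth_time \<omega> n \<le> t"
    then have "{j. 1 \<le> j \<and> birth_time \<omega> j \<le> t} \<subseteq> {1..n - 1}"
      using birth_time_le_iff[OF assms(1) assms(2)] by fastforce
    then have "card {j. 1 \<le> j \<and> birth_time \<omega> j \<le> t} \<le> n - 1"
      using card_mono[of "{1..n - 1}"] by fastforce
    then show False using card assms(2) by simp
  qed
qed

lemma yule_Y_tau_eq_type_counts:
  assumes "\<forall>k. 0 < fst (\<omega> k)" and "1 \<le> n"
  shows "yule_Y \<omega> i (yule_tau \<omega> n) = type_counts n (yule_type \<omega>) i"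
proof -
  have "{j. 1 \<le> j \<and> birth_time \<omega> j \<le> birth_time \<omega> n \<and> yule_type \<omega> j = i}
      = {j \<in> {1..n}. yule_type \<omega> j = i}"
    using birth_time_le_iff[OF assms(1) _ assms(2)] by auto
  then show ?thesis
    by (simp add: yule_Y_def type_counts_def yule_tau_eq_birth_time[OF assms])
qed

section \<open>The law of the genealogical tree\<close>

lemma prod_atLeastAtMost_2_shift:
  fixes f :: "nat \<Rightarrow> 'a::comm_monoid_mult"
  shows "1 \<le> n \<Longrightarrow> (\<Prod>k\<in>{2..n}. f k) = (\<Prod>i<n - 1. f (i + 2))"
  by (rule prod.reindex_bij_witness[of _ "\<lambda>i. i + 2" "\<lambda>k. k - 2"])
    (auto simp del: add_2_eq_Suc')

lemma emeasure_yule_coord_choice: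
  "emeasure (yule_coord p k) (UNIV \<times> {c})
     = ennreal (pmf (pmf_of_set {1..Suc k}) (fst c) * pmf (bernoulli_pmf p) (snd c))"
proof -
  let ?Exp = "density lborel (exponential_density (real (Suc k)))"
  let ?A = "measure_pmf (pmf_of_set {1..Suc k})" and ?B = "measure_pmf (bernoulli_pmf p)"
  interpret AB: sigma_finite_measure "?A \<Otimes>\<^sub>M ?B"
    by (rule prob_space_imp_sigma_finite) (intro prob_space_pair prob_space_measure_pmf)
  have "emeasure (yule_coord p k) (UNIV \<times> {c}) = emeasure ?Exp UNIV * emeasure (?A \<Otimes>\<^sub>M ?B) {c}"
    unfolding yule_coord_def
    by (rule AB.emeasure_pair_measure_Times) (auto simp: sets_pair_measure_pmf)
  also have "emeasure ?Exp UNIV = 1"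
    using prob_space.emeasure_space_1[OF prob_space_exponential_density[of "real (Suc k)"]] by simp
  also have "emeasure (?A \<Otimes>\<^sub>M ?B) {c} = emeasure ?A {fst c} * emeasure ?B {snd c}"
    using measure_pmf.emeasure_pair_measure_Times[of "{fst c}" ?A "{snd c}"] by (cases c) simp
  finally show ?thesis
    by (simp only: emeasure_pmf_single mult_1 ennreal_mult[OF pmf_nonneg pmf_nonneg])
qed

lemma emeasure_yule_tree_preimage:
  "emeasure (yule_space p) (yule_tree n -` {tree_of_choices n cs} \<inter> space (yule_space p))
     = ennreal (\<Prod>i<n - 1. pmf (pmf_of_set {1..Suc i}) (fst (cs ! i)) * pmf (bernoulli_pmf p) (snd (cs ! i)))"
proof -
  have "emeasure (yule_space p) (yule_tree n -` {tree_of_choices n cs} \<inter> space (yule_space p))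
      = (\<Prod>i<n - 1. emeasure (yule_coord p i) (UNIV \<times> {cs ! i}))"
    unfolding yule_tree_preimage
    by (unfold yule_space_eq_PiM, rule emeasure_PiM_emb[OF prob_space_yule_coord])
      (auto simp: yule_coord_def sets_pair_measure_pmf)
  then show ?thesis by (simp add: emeasure_yule_coord_choice prod_ennreal)
qed

lemma pmf_of_set_recursive_trees:
  "pmf_of_set (recursive_trees n) = Pi_pmf {2..n} undefined (\<lambda>k. pmf_of_set {1..<k})"
proof -
  have "PiE_dflt {2..n} undefined (\<lambda>k. {1..<k}) = recursive_trees n"
    by (auto simp: PiE_dflt_def recursive_trees_def PiE_def extensional_def)
  then show ?thesis by (subst Pi_pmf_of_set) auto
qed

lemma pmf_percolated_rrt_tree_of_choices:
  assumes "1 \<le> n"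
  shows "pmf (percolated_rrt n p) (tree_of_choices n cs)
    = (\<Prod>i<n - 1. pmf (pmf_of_set {1..Suc i}) (fst (cs ! i)) * pmf (bernoulli_pmf p) (snd (cs ! i)))"
proof -
  obtain par keep where t: "tree_of_choices n cs = (par, keep)" by fastforce
  have par: "par k = (if k \<in> {2..n} then fst (cs ! (k - 2)) else undefined)"
    and keep: "keep k = (if k \<in> {2..n} then snd (cs ! (k - 2)) else False)" for k
    using t by (auto simp: tree_of_choices_def)
  have "pmf (percolated_rrt n p) (tree_of_choices n cs)
      = (\<Prod>k\<in>{2..n}. pmf (pmf_of_set {1..<k}) (par k)) * (\<Prod>k\<in>{2..n}. pmf (bernoulli_pmf p) (keep k))"
    unfolding percolated_rrt_def t pmf_pair pmf_of_set_recursive_trees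
    by (subst (1 2) pmf_Pi') (auto simp: par keep)
  also have "\<dots> = (\<Prod>k\<in>{2..n}. pmf (pmf_of_set {1..<k}) (par k) * pmf (bernoulli_pmf p) (keep k))"
    by (rule prod.distrib[symmetric])
  also have "\<dots> = (\<Prod>i<n - 1. pmf (pmf_of_set {1..Suc i}) (fst (cs ! i)) * pmf (bernoulli_pmf p) (snd (cs ! i)))"
    by (simp add: prod_atLeastAtMost_2_shift[OF assms] par keep atLeastLessThanSuc_atLeastAtMost)
  finally show ?thesis .
qed

lemma set_pmf_percolated_rrt:
  assumes "(par, keep) \<in> set_pmf (percolated_rrt n p)"
  shows "par \<in> recursive_trees n" and "k \<notin> {2..n} \<Longrightarrow> \<not> keep k"
proof -
  have "finite (recursive_trees n)" and "recursive_trees n \<noteq> {}"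
    by (auto simp: recursive_trees_def PiE_eq_empty_iff intro!: finite_PiE)
  then show "par \<in> recursive_trees n" using assms by (auto simp: percolated_rrt_def)
  show "k \<notin> {2..n} \<Longrightarrow> \<not> keep k"
    using assms set_Pi_pmf_subset[of "{2..n}" False] by (auto simp: percolated_rrt_def)
qed

lemma yule_tree_chain_of_tree:
  assumes "(par, keep) \<in> set_pmf (percolated_rrt n p)"
  shows "yule_tree n (chain_of_tree (par, keep)) = (par, keep)"
proof -
  have "par k = undefined" if "k \<notin> {2..n}" for k
    using set_pmf_percolated_rrt(1)[OF assms] that unfolding recursive_trees_def by (rule PiE_arb)
  then show ?thesis
    using set_pmf_percolated_rrt(2)[OF assms]
    by (auto simp: yule_tree_def tree_of_choices_def chain_of_tree_def fun_eq_iff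
        le_add_diff_inverse2 simp del: add_2_eq_Suc')
qed

lemma distr_yule_tree:
  assumes "1 \<le> n"
  shows "distr (yule_space p) (percolated_rrt n p) (yule_tree n) = measure_pmf (percolated_rrt n p)"
proof (rule measure_eqI_countable_AE[where \<Omega> = "range (tree_of_choices n)"])
  show "sets (distr (yule_space p) (percolated_rrt n p) (yule_tree n)) = UNIV"
    and "sets (measure_pmf (percolated_rrt n p)) = UNIV" by simp_all
  show "countable (range (tree_of_choices n))" by (rule countable_image[OF countableI_type])
  have meas: "yule_tree n \<in> measurable (yule_space p) (percolated_rrt n p)"
    using measurable_yule_tree by simp
  show "AE t in distr (yule_space p) (percolated_rrt n p) (yule_tree n). t \<in> range (tree_of_choices n)"
    by (subst AE_distr_iff[OF meas]) (auto simp: yule_tree_def intro!: AE_I2)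
  show "AE t in percolated_rrt n p. t \<in> range (tree_of_choices n)"
    unfolding AE_measure_pmf_iff by (metis yule_tree_chain_of_tree yule_tree_def rangeI surj_pair)
  fix t assume "t \<in> range (tree_of_choices n)"
  then obtain cs where t: "t = tree_of_choices n cs" by blast
  show "emeasure (distr (yule_space p) (percolated_rrt n p) (yule_tree n)) {t}
      = emeasure (percolated_rrt n p) {t}"
    using emeasure_distr[OF meas, of "{t}"]
    by (simp add: t emeasure_pmf_single emeasure_yule_tree_preimage
        pmf_percolated_rrt_tree_of_choices[OF assms])
qed

lemma AE_cluster_sizes_eq_type_counts:
  assumes "1 \<le> n"
  shows "AE t in percolated_rrt n p.
    (case t of (par, keep) \<Rightarrow> cluster_sizes n par keep) = type_counts n (yule_type (chain_of_tree t))"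
  unfolding AE_measure_pmf_iff
  by (auto simp: cluster_sizes_eq_type_counts[OF assms] dest: set_pmf_percolated_rrt(1))

lemma AE_yule_Y_tau_eq_type_counts:
  assumes "1 \<le> n"
  shows "AE \<omega> in yule_space p.
    type_counts n (yule_type (chain_of_tree (yule_tree n \<omega>))) = (\<lambda>i. yule_Y \<omega> i (yule_tau \<omega> n))"
  using AE_holding_times_pos
proof eventually_elim
  case (elim \<omega>)
  show ?case using yule_Y_tau_eq_type_counts[OF elim assms]
    by (simp add: fun_eq_iff type_counts_chain_of_yule_tree)
qed

theorem lemma5p1:
  fixes p :: real and n :: nat
  assumes "0 \<le> p" and "p \<le> 1" and "1 \<le> n"
  shows "distr (measure_pmf (percolated_rrt n p)) (PiM UNIV (\<lambda>_::nat. count_space (UNIV :: nat set)))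
             (\<lambda>(par, keep). cluster_sizes n par keep)
       = distr (yule_space p) (PiM UNIV (\<lambda>_::nat. count_space (UNIV :: nat set)))
             (\<lambda>\<omega>. \<lambda>i. yule_Y \<omega> i (yule_tau \<omega> n))"
proof -
  define N where "N = PiM UNIV (\<lambda>_::nat. count_space (UNIV :: nat set))"
  define H where "H = (\<lambda>t. type_counts n (yule_type (chain_of_tree t)))"
  have space_N: "space N = UNIV" by (simp add: N_def space_PiM)
  have H_meas: "H \<in> measurable (percolated_rrt n p) N" and "H \<in> measurable (count_space UNIV) N"
    by (simp_all add: space_N)
  have "distr (percolated_rrt n p) N (\<lambda>(par, keep). cluster_sizes n par keep)
      = distr (percolated_rrt n p) N H"
    using AE_cluster_sizes_eq_type_counts[OF assms(3)] by (intro distr_cong_AE) (simp_all add: space_N H_def)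
  also have "\<dots> = distr (distr (yule_space p) (percolated_rrt n p) (yule_tree n)) N H"
    by (simp only: distr_yule_tree[OF assms(3)])
  also have "\<dots> = distr (yule_space p) N (\<lambda>\<omega>. H (yule_tree n \<omega>))"
    using measurable_yule_tree by (subst distr_distr[OF H_meas]) (simp_all add: comp_def)
  also have "\<dots> = distr (yule_space p) N (\<lambda>\<omega> i. yule_Y \<omega> i (yule_tau \<omega> n))"
    using AE_yule_Y_tau_eq_type_counts[OF assms(3)] measurable_yule_Y_tau[OF assms(3)]
      measurable_compose[OF measurable_yule_tree \<open>H \<in> measurable (count_space UNIV) N\<close>]
    by (intro distr_cong_AE) (simp_all add: H_def N_def)
  finally show ?thesis by (simp only: N_def)
qed

end
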